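(* Let $\varphi=\frac{1+\sqrt5}{2}$, $F_n=\frac{\varphi^n-(-1/\varphi)^n}{\varphi+1/\varphi}$, $F_0!=1$, $F_n!=F_1\cdots F_n$. For commuting variables $x,y$ and $n\ge1$ let $(x+y)_F^n=\prod_{k=0}^{n-1}(x+(-1)^k\varphi^{n-1-2k}y)$, $(x+y)_F^0=1$, and let $(x-y)_F^n$ denote the same expression with $y$ replaced by $-y$. Let $D_F^x$ (resp. $D_F^y$) be the Golden derivative in $x$ (resp. $y$), acting on polynomials as the linear operator with $D_F^x x^m=F_mx^{m-1}$ ($m\ge1$), $D_F^x1=0$, other variables treated as constants (for nonzero argument this coincides with $D_F^xf(x)=\frac{f(\varphi x)-f(-x/\varphi)}{(\varphi+1/\varphi)x}$). Then for every $n\ge1$: $$D_F^x(x+y)_F^n=F_n(x+y)_F^{n-1},\qquad D_F^y(x+y)_F^n=F_n(x-y)_F^{n-1},$$ and for every $k\ge0$, $$(D_F^y)^{2k}(x+y)_F^{2k}=(-1)^kF_{2k}!,\qquad (D_F^y)^{2k+1}(x+y)_F^{2k+1}=(-1)^kF_{2k+1}!.$$ *)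

theory Defs
  imports Complex_Main "HOL-Computational_Algebra.Polynomial"
begin

definition gphi :: real where "gphi = (1 + sqrt 5) / 2"

definition gF :: "nat \<Rightarrow> real" where
  "gF n = (gphi ^ n - (-1 / gphi) ^ n) / (gphi + 1 / gphi)"

definition gFfact :: "nat \<Rightarrow> real" where
  "gFfact n = (\<Prod>i\<in>{1..n}. gF i)"

definition gderiv :: "real poly \<Rightarrow> real poly" where
  "gderiv p = (\<Sum>m\<in>{1..degree p}. monom (gF m * coeff p m) (m - 1))"

text \<open>Two-variable polynomials in x, y are represented as polynomials in x
  whose coefficients are real polynomials in y (type real poly poly).\<close>

definition gderiv_x :: "real poly poly \<Rightarrow> real poly poly" where
  "gderiv_x P = (\<Sum>m\<in>{1..degree P}. monom (smult (gF m) (coeff P m)) (m - 1))"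

definition gderiv_y :: "real poly poly \<Rightarrow> real poly poly" where
  "gderiv_y P = map_poly gderiv P"

text \<open>(x + s y)_F^n = prod_{k<n} (x + (-1)^k phi^(n-1-2k) s y); s = 1 gives (x+y)_F^n,
  s = -1 gives (x-y)_F^n. Empty product (n = 0) is 1.\<close>
definition gbinom :: "real \<Rightarrow> nat \<Rightarrow> real poly poly" where
  "gbinom s n = (\<Prod>k<n. [: [:0, s * (-1) ^ k * gphi powi (int n - 1 - 2 * int k):], 1 :])"

end

theory Submission
  imports Defs
begin

text \<open>Write psi = -1/phi, so that Binet's formula reads F_m sqrt 5 = phi^m - psi^m and the
  golden derivative of a polynomial is the difference quotient (f(phi y) - f(psi y)) / (sqrt 5 y).
  A bivariate polynomial is determined by its values at points with nonzero coordinates, so the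
  derivative formulas reduce to identities for the product of the factors
  x + s (-1)^k phi^(n-1-2k) y, k < n. Scaling y by phi (resp. psi) shifts every exponent by one,
  which turns all factors but the first (resp. last) into those of the product of order n - 1
  with s replaced by -s, and the two leftover factors differ by s (phi^n - psi^n) y; scaling x
  works alike, without the sign change. Iterating the y-rule, the alternating signs s, -s, s, ...
  accumulate to (-1)^(n div 2).\<close>

lemma gphi_pos: "gphi > 0"
  unfolding gphi_def by (simp add: add_pos_nonneg)

lemma gphi_plus_inverse: "gphi + 1 / gphi = sqrt 5"
proof -
  have "sqrt 5 * sqrt 5 = 5" by simp
  moreover have "1 + sqrt 5 > 0" by (simp add: add_pos_nonneg)
  ultimately show ?thesis unfolding gphi_def by (simp add: field_simps)
qed

definition gpsi :: real where "gpsi = - 1 / gphi"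

lemma gphi_times_gpsi: "gphi * gpsi = - 1"
  unfolding gpsi_def using gphi_pos by simp

lemma gF_binet: "gF n * sqrt 5 = gphi ^ n - gpsi ^ n"
  unfolding gF_def gphi_plus_inverse gpsi_def by simp

lemma gphi_powi_add_1: "gphi powi (a + 1) = gphi * gphi powi a"
  using gphi_pos by (simp add: power_int_add_1 mult.commute)

lemma gpsi_power: "gpsi ^ n = (-1) ^ n * gphi powi (- int n)"
proof -
  have "gpsi = (-1) * inverse gphi" unfolding gpsi_def by (simp add: divide_inverse)
  then have "gpsi ^ n = (-1) ^ n * inverse gphi ^ n" by (simp only: power_mult_distrib[symmetric])
  then show ?thesis by (simp add: power_inverse power_int_minus)
qed

lemma golden_difference_sum:
  fixes a :: "nat \<Rightarrow> real"
  shows "(\<Sum>m\<in>{1..d}. gF m * a m * z ^ (m - 1)) * (sqrt 5 * z)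
       = (\<Sum>i\<le>d. a i * (gphi * z) ^ i) - (\<Sum>i\<le>d. a i * (gpsi * z) ^ i)"
proof -
  have "(\<Sum>m\<in>{1..d}. gF m * a m * z ^ (m - 1)) * (sqrt 5 * z)
      = (\<Sum>m\<in>{1..d}. a m * (gF m * sqrt 5) * z ^ m)"
    unfolding sum_distrib_right
  proof (rule sum.cong)
    fix m assume "m \<in> {1..d}"
    then have "z ^ (m - 1) * z = z ^ m" by (cases m) auto
    then show "gF m * a m * z ^ (m - 1) * (sqrt 5 * z) = a m * (gF m * sqrt 5) * z ^ m"
      by (metis mult.commute mult.left_commute)
  qed simp
  also have "\<dots> = (\<Sum>i\<in>{1..d}. a i * ((gphi * z) ^ i - (gpsi * z) ^ i))"
    by (simp add: gF_binet power_mult_distrib algebra_simps)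
  also have "\<dots> = (\<Sum>i\<le>d. a i * ((gphi * z) ^ i - (gpsi * z) ^ i))"
  proof -
    have "{..d} = insert 0 {1..d}" by auto
    then show ?thesis by simp
  qed
  finally show ?thesis by (simp add: sum_subtractf right_diff_distrib)
qed

lemma poly_gderiv: "poly (gderiv p) y * (sqrt 5 * y) = poly p (gphi * y) - poly p (gpsi * y)"
  using golden_difference_sum[where a = "coeff p" and d = "degree p" and z = y]
  unfolding gderiv_def poly_sum poly_monom poly_altdef[of p] by (simp add: mult.assoc)

lemma gderiv_0 [simp]: "gderiv 0 = 0"
  by (simp add: gderiv_def)

definition poly2 :: "'a::comm_semiring_1 poly poly \<Rightarrow> 'a \<Rightarrow> 'a \<Rightarrow> 'a" where
  "poly2 P x y = poly (poly P [:x:]) y"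

lemma poly2_map_poly: "poly2 P x y = poly (map_poly (\<lambda>q. poly q y) P) x"
  unfolding poly2_def by (induction P) (simp_all add: map_poly_pCons)

lemma poly2_monom: "poly2 (monom a n) x y = poly a y * x ^ n"
  unfolding poly2_def by (simp add: poly_monom poly_power)

lemma poly2_sum: "poly2 (\<Sum>i\<in>A. f i) x y = (\<Sum>i\<in>A. poly2 (f i) x y)"
  unfolding poly2_def by (simp add: poly_sum)

lemma poly2_smult_const: "poly2 (smult [:a:] P) x y = a * poly2 P x y"
  unfolding poly2_def by simp

lemma poly2_altdef:
  assumes "degree P \<le> N"
  shows "poly2 P x y = (\<Sum>i\<le>N. poly (coeff P i) y * x ^ i)"
  using poly_as_sum_of_monoms'[OF assms] poly2_sum[of "\<lambda>i. monom (coeff P i) i" "{..N}"]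
  by (simp add: poly2_monom)

lemma poly_eq_0_if_zero_off_0:
  fixes p :: "'a::{idom,ring_char_0} poly"
  assumes "\<And>z. z \<noteq> 0 \<Longrightarrow> poly p z = 0"
  shows "p = 0"
proof -
  have "p * [:0, 1:] = 0"
    using assms poly_all_0_iff_0[of "p * [:0, 1:]"] by auto
  then show ?thesis by simp
qed

lemma poly2_eqI:
  fixes P Q :: "'a::{idom,ring_char_0} poly poly"
  assumes "\<And>x y. x \<noteq> 0 \<Longrightarrow> y \<noteq> 0 \<Longrightarrow> poly2 P x y = poly2 Q x y"
  shows "P = Q"
proof -
  have "coeff (P - Q) i = 0" for i
  proof (rule poly_eq_0_if_zero_off_0)
    fix y :: 'a assume "y \<noteq> 0"
    have "map_poly (\<lambda>q. poly q y) (P - Q) = 0"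
      using assms \<open>y \<noteq> 0\<close>
      by (intro poly_eq_0_if_zero_off_0) (simp add: poly2_def flip: poly2_map_poly)
    then show "poly (coeff (P - Q) i) y = 0"
      by (metis coeff_0 coeff_map_poly poly_0)
  qed
  then show ?thesis by (simp add: poly_eq_iff)
qed

lemma poly2_gderiv_y:
  "poly2 (gderiv_y P) x y * (sqrt 5 * y) = poly2 P x (gphi * y) - poly2 P x (gpsi * y)"
proof -
  have deg: "degree (gderiv_y P) \<le> degree P"
    unfolding gderiv_y_def by (rule map_poly_degree_leq)
  have "poly2 (gderiv_y P) x y * (sqrt 5 * y)
      = (\<Sum>i\<le>degree P. poly (gderiv (coeff P i)) y * (sqrt 5 * y) * x ^ i)"
    unfolding poly2_altdef[OF deg] sum_distrib_right
    by (simp add: gderiv_y_def coeff_map_poly algebra_simps)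
  also have "\<dots> = poly2 P x (gphi * y) - poly2 P x (gpsi * y)"
    by (simp add: poly_gderiv poly2_altdef[of P "degree P"] sum_subtractf left_diff_distrib)
  finally show ?thesis .
qed

lemma poly2_gderiv_x:
  "poly2 (gderiv_x P) x y * (sqrt 5 * x) = poly2 P (gphi * x) y - poly2 P (gpsi * x) y"
proof -
  have "poly2 (gderiv_x P) x y = (\<Sum>m\<in>{1..degree P}. gF m * poly (coeff P m) y * x ^ (m - 1))"
    unfolding gderiv_x_def poly2_sum poly2_monom by simp
  then show ?thesis
    using golden_difference_sum[where a = "\<lambda>m. poly (coeff P m) y" and d = "degree P" and z = x]
    by (simp add: poly2_altdef[of P "degree P"] mult_ac)
qed

lemma gderiv_y_eqI:
  assumes "\<And>x y. poly2 Q x y * (sqrt 5 * y) = poly2 P x (gphi * y) - poly2 P x (gpsi * y)"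
  shows "gderiv_y P = Q"
proof (rule poly2_eqI)
  fix x y :: real assume "y \<noteq> 0"
  then have "sqrt 5 * y \<noteq> 0" by simp
  then show "poly2 (gderiv_y P) x y = poly2 Q x y"
    using assms[of x y] poly2_gderiv_y[of P x y] by (metis mult_cancel_right)
qed

lemma gderiv_x_eqI:
  assumes "\<And>x y. poly2 Q x y * (sqrt 5 * x) = poly2 P (gphi * x) y - poly2 P (gpsi * x) y"
  shows "gderiv_x P = Q"
proof (rule poly2_eqI)
  fix x y :: real assume "x \<noteq> 0"
  then have "sqrt 5 * x \<noteq> 0" by simp
  then show "poly2 (gderiv_x P) x y = poly2 Q x y"
    using assms[of x y] poly2_gderiv_x[of P x y] by (metis mult_cancel_right)
qed

lemma gderiv_y_smult_const: "gderiv_y (smult [:a:] P) = smult [:a:] (gderiv_y P)"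
  by (rule gderiv_y_eqI) (simp add: poly2_smult_const poly2_gderiv_y mult.assoc right_diff_distrib)

lemma funpow_gderiv_y_smult_const:
  "(gderiv_y ^^ n) (smult [:a:] P) = smult [:a:] ((gderiv_y ^^ n) P)"
  by (induction n) (simp_all add: gderiv_y_smult_const)

definition golden_prod :: "real \<Rightarrow> nat \<Rightarrow> real \<Rightarrow> real \<Rightarrow> real" where
  "golden_prod s n x y = (\<Prod>k<n. x + s * (-1) ^ k * gphi powi (int n - 1 - 2 * int k) * y)"

lemma poly2_gbinom: "poly2 (gbinom s n) x y = golden_prod s n x y"
  unfolding poly2_def gbinom_def golden_prod_def poly_prod by (simp add: algebra_simps)

lemma gphi_powi_Suc_exponent:
  "gphi powi (int (Suc n) - 1 - 2 * int k) = gphi * gphi powi (int n - 1 - 2 * int k)"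
  using gphi_powi_add_1[of "int n - 1 - 2 * int k"] by (simp add: algebra_simps)

lemma gphi_powi_Suc_Suc_exponent:
  "gphi * gphi powi (int (Suc n) - 1 - 2 * int (Suc k)) = gphi powi (int n - 1 - 2 * int k)"
  using gphi_powi_add_1[of "int (Suc n) - 1 - 2 * int (Suc k)"] by (simp add: algebra_simps)

lemma golden_prod_Suc_gphi_y:
  "golden_prod s (Suc n) x (gphi * y) = (x + s * gphi ^ Suc n * y) * golden_prod (-s) n x y"
proof -
  have "golden_prod s (Suc n) x (gphi * y) = (x + s * gphi ^ Suc n * y) *
     (\<Prod>k<n. x + s * (-1) ^ Suc k * gphi powi (int (Suc n) - 1 - 2 * int (Suc k)) * (gphi * y))"
    unfolding golden_prod_def prod.lessThan_Suc_shift by simp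
  also have "(\<Prod>k<n. x + s * (-1) ^ Suc k * gphi powi (int (Suc n) - 1 - 2 * int (Suc k)) * (gphi * y))
      = golden_prod (-s) n x y"
    unfolding golden_prod_def
    by (intro prod.cong refl, subst gphi_powi_Suc_Suc_exponent[symmetric]) (simp add: algebra_simps)
  finally show ?thesis .
qed

lemma golden_prod_Suc_gpsi_y:
  "golden_prod s (Suc n) x (gpsi * y) = golden_prod (-s) n x y * (x + s * gpsi ^ Suc n * y)"
proof -
  have "golden_prod s (Suc n) x (gpsi * y) =
     (\<Prod>k<n. x + s * (-1) ^ k * gphi powi (int (Suc n) - 1 - 2 * int k) * (gpsi * y)) *
     (x + s * gpsi ^ Suc n * y)"
    unfolding golden_prod_def prod.lessThan_Suc
    by (simp add: gpsi_power mult_ac)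
  also have "(\<Prod>k<n. x + s * (-1) ^ k * gphi powi (int (Suc n) - 1 - 2 * int k) * (gpsi * y))
      = golden_prod (-s) n x y"
    unfolding golden_prod_def gphi_powi_Suc_exponent
    using gphi_pos by (intro prod.cong refl) (simp add: gpsi_def algebra_simps)
  finally show ?thesis .
qed

lemma golden_prod_Suc_gphi_x:
  "golden_prod s (Suc n) (gphi * x) y = gphi ^ Suc n * (golden_prod s n x y * (x - s * gpsi ^ Suc n * y))"
proof -
  have "golden_prod s (Suc n) (gphi * x) y =
     (\<Prod>k<n. gphi * x + s * (-1) ^ k * gphi powi (int (Suc n) - 1 - 2 * int k) * y) *
     (gphi * x - s * (gphi * gpsi) * gpsi ^ n * y)"
    unfolding golden_prod_def prod.lessThan_Suc gphi_times_gpsi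
    by (simp add: gpsi_power mult_ac)
  also have "(\<Prod>k<n. gphi * x + s * (-1) ^ k * gphi powi (int (Suc n) - 1 - 2 * int k) * y)
      = (\<Prod>k<n. gphi * (x + s * (-1) ^ k * gphi powi (int n - 1 - 2 * int k) * y))"
    unfolding gphi_powi_Suc_exponent by (intro prod.cong refl) (simp add: algebra_simps)
  also have "\<dots> = gphi ^ n * golden_prod s n x y"
    unfolding golden_prod_def prod.distrib by simp
  finally show ?thesis by (simp add: algebra_simps)
qed

lemma golden_prod_Suc_gpsi_x:
  "golden_prod s (Suc n) (gpsi * x) y = gpsi ^ Suc n * ((x - s * gphi ^ Suc n * y) * golden_prod s n x y)"
proof -
  have "golden_prod s (Suc n) (gpsi * x) y = (gpsi * x - s * (gphi * gpsi) * gphi ^ n * y) *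
     (\<Prod>k<n. gpsi * x + s * (-1) ^ Suc k * gphi powi (int (Suc n) - 1 - 2 * int (Suc k)) * y)"
    unfolding golden_prod_def prod.lessThan_Suc_shift gphi_times_gpsi by simp
  also have "(\<Prod>k<n. gpsi * x + s * (-1) ^ Suc k * gphi powi (int (Suc n) - 1 - 2 * int (Suc k)) * y)
      = (\<Prod>k<n. gpsi * (x + s * (-1) ^ k * gphi powi (int n - 1 - 2 * int k) * y))"
    using gphi_pos
    by (intro prod.cong refl, subst gphi_powi_Suc_Suc_exponent[symmetric]) (simp add: gpsi_def algebra_simps)
  also have "\<dots> = gpsi ^ n * golden_prod s n x y"
    unfolding golden_prod_def prod.distrib by simp
  finally show ?thesis by (simp add: algebra_simps)
qed

lemma golden_prod_Suc_difference_y: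
  "golden_prod s (Suc n) x (gphi * y) - golden_prod s (Suc n) x (gpsi * y)
     = s * gF (Suc n) * golden_prod (-s) n x y * (sqrt 5 * y)"
proof -
  have "s * gF (Suc n) * golden_prod (-s) n x y * (sqrt 5 * y)
      = s * (gF (Suc n) * sqrt 5) * y * golden_prod (-s) n x y"
    by (simp add: mult_ac)
  then show ?thesis
    unfolding golden_prod_Suc_gphi_y golden_prod_Suc_gpsi_y gF_binet by (simp add: algebra_simps)
qed

lemma golden_prod_Suc_difference_x:
  "golden_prod s (Suc n) (gphi * x) y - golden_prod s (Suc n) (gpsi * x) y
     = gF (Suc n) * golden_prod s n x y * (sqrt 5 * x)"
proof -
  have "gF (Suc n) * golden_prod s n x y * (sqrt 5 * x)
      = (gF (Suc n) * sqrt 5) * x * golden_prod s n x y"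
    by (simp add: mult_ac)
  then show ?thesis
    unfolding golden_prod_Suc_gphi_x golden_prod_Suc_gpsi_x gF_binet by (simp add: algebra_simps)
qed

lemma gderiv_y_gbinom:
  assumes "n \<ge> 1"
  shows "gderiv_y (gbinom s n) = smult [:s * gF n:] (gbinom (-s) (n - 1))"
proof -
  obtain m where "n = Suc m" using assms by (cases n) auto
  then show ?thesis
    by (intro gderiv_y_eqI)
      (simp add: poly2_smult_const poly2_gbinom golden_prod_Suc_difference_y)
qed

lemma gderiv_x_gbinom:
  assumes "n \<ge> 1"
  shows "gderiv_x (gbinom s n) = smult [:gF n:] (gbinom s (n - 1))"
proof -
  obtain m where "n = Suc m" using assms by (cases n) auto
  then show ?thesis
    by (intro gderiv_x_eqI)
      (simp add: poly2_smult_const poly2_gbinom golden_prod_Suc_difference_x)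
qed

lemma funpow_gderiv_y_gbinom:
  "(gderiv_y ^^ n) (gbinom s n) = [:[: s ^ n * (-1) ^ (n div 2) * gFfact n :]:]"
proof (induction n arbitrary: s)
  case 0
  show ?case by (simp add: gbinom_def gFfact_def one_pCons)
next
  case (Suc n)
  have sign: "(-1::real) ^ n * (-1) ^ (n div 2) = (-1) ^ (Suc n div 2)"
    by (cases "even n") (auto elim!: evenE oddE simp: power_add)
  have gFfact_Suc: "gFfact (Suc n) = gF (Suc n) * gFfact n"
    unfolding gFfact_def by (simp add: prod.nat_ivl_Suc')
  have "(gderiv_y ^^ Suc n) (gbinom s (Suc n)) = (gderiv_y ^^ n) (gderiv_y (gbinom s (Suc n)))"
    by (simp only: funpow_Suc_right o_apply)
  also have "\<dots> = smult [:s * gF (Suc n):] [:[: (-s) ^ n * (-1) ^ (n div 2) * gFfact n :]:]"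
    by (simp add: gderiv_y_gbinom funpow_gderiv_y_smult_const Suc.IH)
  also have "\<dots> = [:[: s ^ Suc n * ((-1) ^ n * (-1) ^ (n div 2)) * (gF (Suc n) * gFfact n) :]:]"
    by (simp add: power_minus[of s n] mult_ac)
  finally show ?case
    by (simp only: sign gFfact_Suc)
qed

theorem mainTheorem11:
  shows "(\<forall>n::nat. n \<ge> 1 \<longrightarrow>
            gderiv_x (gbinom 1 n) = smult [:gF n:] (gbinom 1 (n - 1)) \<and>
            gderiv_y (gbinom 1 n) = smult [:gF n:] (gbinom (-1) (n - 1)))
       \<and> (\<forall>k::nat.
            (gderiv_y ^^ (2 * k)) (gbinom 1 (2 * k)) = [:[: (-1) ^ k * gFfact (2 * k) :]:] \<and>
            (gderiv_y ^^ (2 * k + 1)) (gbinom 1 (2 * k + 1)) = [:[: (-1) ^ k * gFfact (2 * k + 1) :]:])"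
  using gderiv_x_gbinom[of _ 1] gderiv_y_gbinom[of _ 1]
    funpow_gderiv_y_gbinom[of "2 * _" 1] funpow_gderiv_y_gbinom[of "2 * _ + 1" 1]
  by simp

end
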